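(* Let $(u_{k,\ell})_{k,\ell\in\mathbb Z_q}$ be as in the finite-spin model with $u=\min_{k\ne\ell}u_{k,\ell}>0$ and $U=\max_{k,\ell}u_{k,\ell}$, and let $d_{\max}\in\mathbb N_0$. Put $d(u,U,d_{\max})=2+\lfloor d_{\max}(u+U)/u\rfloor$. Then for every $d\ge d(u,U,d_{\max})$, every $\omega^0\in\mathbb Z_q^V$ whose set of broken edges $D$ satisfies $d_D\le d_{\max}$ is stable for the finite-spin model on $\mathcal T^d$, with stability constant $c=(d-1)u-d_{\max}(u+U)>0$.
   Context: $\mathcal T^d=(V,E)$ is the Cayley tree of order $d$ (every vertex has $d+1$ neighbours). Finite-spin model: spins in $\mathbb Z_q=\{0,\dots,q-1\}$, edge energy $\Phi(\omega_v,\omega_w)=u_{\omega_v,\omega_w}$ with $u_{k,\ell}\ge0$, $u_{k,k}=0$. Broken edges of $\omega^0$: $D=\{\{v,w\}\in E:\omega^0_v\ne\omega^0_w\}$; $d_D(v)$ is the number of edges of $D$ incident to $v$, $d_D=\max_v d_D(v)$. For $\omega,\omega^0$ differing at finitely many sites, $H(\omega)-H(\omega^0)=\sum_{\{v,w\}\in E}(\Phi(\omega_v,\omega_w)-\Phi(\omega^0_v,\omega^0_w))$. A configuration $\omega^0$ is stable with stability constant $c>0$ if for all $\omega$ differing from $\omega^0$ at finitely many sites, $H(\omega)-H(\omega^0)\ge c\sum_v\mathbf 1_{\omega_v\ne\omega^0_v}$. *)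

theory Defs
  imports Main Complex_Main
begin

text \<open>Cayley tree of order d: vertices are reduced words over the alphabet {0..d}
  (no two consecutive equal letters), i.e. the Cayley graph of the free product of
  d+1 copies of Z_2. The root [] has d+1 children; every other vertex has one parent
  and d children, so every vertex has d+1 neighbours.\<close>

definition tree_V :: "nat \<Rightarrow> nat list set" where
  "tree_V d = {xs. (\<forall>x\<in>set xs. x \<le> d) \<and> (\<forall>i. Suc i < length xs \<longrightarrow> xs ! i \<noteq> xs ! Suc i)}"

text \<open>Each (undirected) edge is listed exactly once, as the pair (parent, child).\<close>
definition tree_E :: "nat \<Rightarrow> (nat list \<times> nat list) set" where
  "tree_E d = {(v, v @ [a]) | v a. v \<in> tree_V d \<and> a \<le> d \<and> (v = [] \<or> last v \<noteq> a)}"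

text \<open>Spins in Z_q = {0..<q}; edge energy Phi(k,l) = u k l.\<close>
definition config :: "nat \<Rightarrow> nat \<Rightarrow> (nat list \<Rightarrow> nat) \<Rightarrow> bool" where
  "config d q \<omega> \<longleftrightarrow> (\<forall>v\<in>tree_V d. \<omega> v < q)"

definition diff_set :: "nat \<Rightarrow> (nat list \<Rightarrow> nat) \<Rightarrow> (nat list \<Rightarrow> nat) \<Rightarrow> nat list set" where
  "diff_set d \<omega> \<omega>0 = {v\<in>tree_V d. \<omega> v \<noteq> \<omega>0 v}"

text \<open>H(omega) - H(omega0): the sum over all edges of the energy differences; all terms
  vanish except on edges meeting the (finite) set of differing sites, so the sum is
  taken over that finite set of edges.\<close>
definition Hdiff :: "nat \<Rightarrow> (nat \<Rightarrow> nat \<Rightarrow> real) \<Rightarrow> (nat list \<Rightarrow> nat) \<Rightarrow> (nat list \<Rightarrow> nat) \<Rightarrow> real" where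
  "Hdiff d u \<omega> \<omega>0 =
     (\<Sum>e\<in>{e\<in>tree_E d. \<omega> (fst e) \<noteq> \<omega>0 (fst e) \<or> \<omega> (snd e) \<noteq> \<omega>0 (snd e)}.
        u (\<omega> (fst e)) (\<omega> (snd e)) - u (\<omega>0 (fst e)) (\<omega>0 (snd e)))"

definition broken_deg :: "nat \<Rightarrow> (nat list \<Rightarrow> nat) \<Rightarrow> nat list \<Rightarrow> nat" where
  "broken_deg d \<omega>0 v = card {e\<in>tree_E d. (fst e = v \<or> snd e = v) \<and> \<omega>0 (fst e) \<noteq> \<omega>0 (snd e)}"

definition stable_with :: "nat \<Rightarrow> nat \<Rightarrow> (nat \<Rightarrow> nat \<Rightarrow> real) \<Rightarrow> (nat list \<Rightarrow> nat) \<Rightarrow> real \<Rightarrow> bool" where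
  "stable_with d q u \<omega>0 c \<longleftrightarrow> c > 0 \<and>
     (\<forall>\<omega>. config d q \<omega> \<and> finite (diff_set d \<omega> \<omega>0) \<longrightarrow>
        Hdiff d u \<omega> \<omega>0 \<ge> c * real (card (diff_set d \<omega> \<omega>0)))"

definition u_min :: "nat \<Rightarrow> (nat \<Rightarrow> nat \<Rightarrow> real) \<Rightarrow> real" where
  "u_min q u = Min {u k l | k l. k < q \<and> l < q \<and> k \<noteq> l}"

definition u_max :: "nat \<Rightarrow> (nat \<Rightarrow> nat \<Rightarrow> real) \<Rightarrow> real" where
  "u_max q u = Max {u k l | k l. k < q \<and> l < q}"

end

theory Submission
  imports Defs
begin

text \<open>Let \<open>S\<close> be the finite set of sites where \<open>\<omega>\<close> differs from \<open>\<omega>0\<close>, and orient edges away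
  from the root. Each site of \<open>S\<close> has \<open>d\<close> children, and since an edge is determined by its
  child, at most \<open>|S|\<close> of these \<open>d |S|\<close> edges end in \<open>S\<close>: at least \<open>(d - 1) |S|\<close> edges leave
  \<open>S\<close> downwards. Such an edge, if unbroken in \<open>\<omega>0\<close>, is broken in \<open>\<omega>\<close> and gains at least \<open>u\<close>.
  Only broken edges of \<open>\<omega>0\<close> can lose energy, each at most \<open>U\<close> (at most \<open>u + U\<close> after
  discounting a gain credited to it), and at most \<open>d_max |S|\<close> of them meet \<open>S\<close>.\<close>

definition edges_meeting :: "nat \<Rightarrow> nat list set \<Rightarrow> (nat list \<times> nat list) set" where
  "edges_meeting d S = {e\<in>tree_E d. fst e \<in> S \<or> snd e \<in> S}"

definition down_boundary :: "nat \<Rightarrow> nat list set \<Rightarrow> (nat list \<times> nat list) set" where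
  "down_boundary d S = {e\<in>tree_E d. fst e \<in> S \<and> snd e \<notin> S}"

definition broken_edges :: "nat \<Rightarrow> (nat list \<Rightarrow> nat) \<Rightarrow> (nat list \<times> nat list) set" where
  "broken_edges d \<omega>0 = {e\<in>tree_E d. \<omega>0 (fst e) \<noteq> \<omega>0 (snd e)}"

lemma snoc_in_tree_V:
  assumes v: "v \<in> tree_V d" and a: "a \<le> d" and last: "v = [] \<or> last v \<noteq> a"
  shows "v @ [a] \<in> tree_V d"
  unfolding tree_V_def
proof (intro CollectI conjI allI impI)
  show "\<forall>x\<in>set (v @ [a]). x \<le> d" using v a unfolding tree_V_def by auto
next
  fix i assume i: "Suc i < length (v @ [a])"
  show "(v @ [a]) ! i \<noteq> (v @ [a]) ! Suc i"
  proof (cases "Suc i < length v")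
    case True
    then show ?thesis using v unfolding tree_V_def by (simp add: nth_append)
  next
    case False
    then have "Suc i = length v" using i by simp
    moreover from this have "last v = v ! i" by (metis diff_Suc_1 last_conv_nth list.size(3) nat.distinct(1))
    ultimately show ?thesis using last by (auto simp: nth_append)
  qed
qed

lemma tree_E_in_tree_V:
  assumes "e \<in> tree_E d"
  shows "fst e \<in> tree_V d" "snd e \<in> tree_V d"
proof -
  obtain v a where "e = (v, v @ [a])" "v \<in> tree_V d" "a \<le> d" "v = [] \<or> last v \<noteq> a"
    using assms unfolding tree_E_def by blast
  then show "fst e \<in> tree_V d" "snd e \<in> tree_V d" using snoc_in_tree_V[of v d a] by auto
qed

lemma fst_tree_E: "e \<in> tree_E d \<Longrightarrow> fst e = butlast (snd e)"
  unfolding tree_E_def by auto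

lemma inj_on_snd_tree_E: "inj_on snd (tree_E d)"
  by (rule inj_onI) (metis fst_tree_E prod.expand)

lemma finite_edges_meeting_vertex: "finite (edges_meeting d {v})"
proof (rule finite_subset)
  show "edges_meeting d {v} \<subseteq> (\<lambda>a. (v, v @ [a])) ` {..d} \<union> {(butlast v, v)}"
    unfolding edges_meeting_def tree_E_def by auto
qed auto

lemma edges_meeting_UN: "edges_meeting d S = (\<Union>v\<in>S. edges_meeting d {v})"
  unfolding edges_meeting_def by blast

lemma finite_edges_meeting: "finite S \<Longrightarrow> finite (edges_meeting d S)"
  by (subst edges_meeting_UN) (simp add: finite_edges_meeting_vertex)

lemma card_children_ge:
  assumes "finite S" "S \<subseteq> tree_V d"
  shows "d * card S \<le> card {e\<in>tree_E d. fst e \<in> S}"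
proof -
  let ?G = "Sigma S (\<lambda>v. {..d} - {last v})"
  have "d * card S = (\<Sum>v\<in>S. d)" by simp
  also have "\<dots> \<le> (\<Sum>v\<in>S. card ({..d} - {last v}))"
    by (rule sum_mono) (simp add: card_Diff_singleton_if)
  also have "\<dots> = card ?G" using assms(1) by simp
  also have "\<dots> \<le> card {e\<in>tree_E d. fst e \<in> S}"
  proof (rule card_inj_on_le)
    show "inj_on (\<lambda>(v, a). (v, v @ [a])) ?G" by (rule inj_onI) auto
    show "(\<lambda>(v, a). (v, v @ [a])) ` ?G \<subseteq> {e\<in>tree_E d. fst e \<in> S}"
      unfolding tree_E_def using assms(2) by auto
    show "finite {e\<in>tree_E d. fst e \<in> S}"
      using finite_edges_meeting[OF assms(1)]
      by (rule finite_subset[rotated]) (auto simp: edges_meeting_def)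
  qed
  finally show ?thesis .
qed

lemma card_down_boundary_ge:
  assumes "finite S" "S \<subseteq> tree_V d"
  shows "d * card S \<le> card (down_boundary d S) + card S"
proof -
  let ?F = "{e\<in>tree_E d. fst e \<in> S}" and ?I = "{e\<in>tree_E d. fst e \<in> S \<and> snd e \<in> S}"
  have finF: "finite ?F"
    using finite_edges_meeting[OF assms(1)]
    by (rule finite_subset[rotated]) (auto simp: edges_meeting_def)
  have IF: "?I \<subseteq> ?F" by blast
  have "card ?I \<le> card S"
  proof (rule card_inj_on_le[OF _ _ assms(1)])
    show "inj_on snd ?I" by (rule inj_on_subset[OF inj_on_snd_tree_E]) auto
  qed auto
  moreover have "down_boundary d S = ?F - ?I" unfolding down_boundary_def by blast
  then have "card (down_boundary d S) = card ?F - card ?I"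
    using card_Diff_subset[OF finite_subset[OF IF finF] IF] by simp
  moreover have "card ?I \<le> card ?F" by (rule card_mono[OF finF IF])
  ultimately show ?thesis using card_children_ge[OF assms] by linarith
qed

lemma card_broken_edges_meeting_le:
  assumes "finite S" "S \<subseteq> tree_V d" "\<And>v. v \<in> tree_V d \<Longrightarrow> broken_deg d \<omega>0 v \<le> dmax"
  shows "card (edges_meeting d S \<inter> broken_edges d \<omega>0) \<le> dmax * card S"
proof -
  have "edges_meeting d S \<inter> broken_edges d \<omega>0 = (\<Union>v\<in>S. edges_meeting d {v} \<inter> broken_edges d \<omega>0)"
    by (subst edges_meeting_UN) blast
  also have "card \<dots> \<le> (\<Sum>v\<in>S. card (edges_meeting d {v} \<inter> broken_edges d \<omega>0))"
    by (rule card_UN_le[OF assms(1)])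
  also have "\<dots> = (\<Sum>v\<in>S. broken_deg d \<omega>0 v)"
    unfolding broken_deg_def edges_meeting_def broken_edges_def
    by (intro sum.cong refl arg_cong[where f = card]) auto
  also have "\<dots> \<le> (\<Sum>v\<in>S. dmax)" using assms(2,3) by (intro sum_mono) auto
  finally show ?thesis by (simp add: mult.commute)
qed

lemma u_min_le:
  assumes "k < q" "l < q" "k \<noteq> l"
  shows "u_min q u \<le> u k l"
  unfolding u_min_def
proof (rule Min_le)
  show "finite {u k l |k l. k < q \<and> l < q \<and> k \<noteq> l}"
    by (rule finite_subset[of _ "(\<lambda>(k, l). u k l) ` ({..<q} \<times> {..<q})"]) auto
qed (use assms in blast)

lemma u_max_ge:
  assumes "k < q" "l < q"
  shows "u k l \<le> u_max q u"
  unfolding u_max_def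
proof (rule Max_ge)
  show "finite {u k l |k l. k < q \<and> l < q}"
    by (rule finite_subset[of _ "(\<lambda>(k, l). u k l) ` ({..<q} \<times> {..<q})"]) auto
qed (use assms in blast)

text \<open>On an edge with spins \<open>(k0, l0)\<close> in \<open>\<omega>0\<close> and \<open>(k, l)\<close> in \<open>\<omega>\<close>, the first indicator marks a
  downward boundary edge of the changed set, the second a broken edge of \<open>\<omega>0\<close>.\<close>

lemma edge_energy_change_ge:
  assumes spins: "k < q" "l < q" "k0 < q" "l0 < q"
    and nonneg: "\<And>k l. k < q \<Longrightarrow> l < q \<Longrightarrow> u k l \<ge> 0"
    and diag: "\<And>k. k < q \<Longrightarrow> u k k = 0"
    and "0 \<le> u_min q u"
  shows "u k l - u k0 l0 \<ge> (if k \<noteq> k0 \<and> l = l0 then u_min q u else 0)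
                           - (if k0 \<noteq> l0 then u_min q u + u_max q u else 0)"
proof (cases "k0 = l0")
  case True
  then have "u k0 l0 = 0" using diag spins by simp
  moreover have "k \<noteq> k0 \<and> l = l0 \<Longrightarrow> u_min q u \<le> u k l"
    using u_min_le spins True by metis
  ultimately show ?thesis using True nonneg[OF spins(1,2)] by auto
next
  case False
  have "u k0 l0 \<le> u_max q u" using u_max_ge spins by metis
  then show ?thesis using False nonneg[OF spins(1,2)] \<open>0 \<le> u_min q u\<close> by auto
qed

lemma Hdiff_ge:
  assumes "config d q \<omega>" "config d q \<omega>0" "finite (diff_set d \<omega> \<omega>0)"
    and nonneg: "\<And>k l. k < q \<Longrightarrow> l < q \<Longrightarrow> u k l \<ge> 0"
    and diag: "\<And>k. k < q \<Longrightarrow> u k k = 0"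
    and "0 \<le> u_min q u"
  defines "S \<equiv> diff_set d \<omega> \<omega>0"
  shows "Hdiff d u \<omega> \<omega>0 \<ge> u_min q u * card (down_boundary d S)
           - (u_min q u + u_max q u) * card (edges_meeting d S \<inter> broken_edges d \<omega>0)"
proof -
  let ?T = "edges_meeting d S"
  let ?c = "\<lambda>e. u (\<omega> (fst e)) (\<omega> (snd e)) - u (\<omega>0 (fst e)) (\<omega>0 (snd e))"
  let ?gain = "\<lambda>e. if e \<in> down_boundary d S then u_min q u else 0"
  let ?loss = "\<lambda>e. if e \<in> broken_edges d \<omega>0 then u_min q u + u_max q u else 0"
  have finT: "finite ?T" using assms(3) finite_edges_meeting unfolding S_def by blast
  have "Hdiff d u \<omega> \<omega>0 = sum ?c ?T"
    unfolding Hdiff_def S_def edges_meeting_def diff_set_def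
    by (rule sum.cong) (auto dest: tree_E_in_tree_V)
  also have "\<dots> \<ge> (\<Sum>e\<in>?T. ?gain e - ?loss e)"
  proof (rule sum_mono)
    fix e assume "e \<in> ?T"
    then have e: "e \<in> tree_E d" by (simp add: edges_meeting_def)
    have V: "fst e \<in> tree_V d" "snd e \<in> tree_V d" using tree_E_in_tree_V[OF e] by auto
    have "e \<in> down_boundary d S \<longleftrightarrow> \<omega> (fst e) \<noteq> \<omega>0 (fst e) \<and> \<omega> (snd e) = \<omega>0 (snd e)"
      using e V by (auto simp: down_boundary_def S_def diff_set_def)
    moreover have "e \<in> broken_edges d \<omega>0 \<longleftrightarrow> \<omega>0 (fst e) \<noteq> \<omega>0 (snd e)"
      using e by (simp add: broken_edges_def)
    moreover have "(if \<omega> (fst e) \<noteq> \<omega>0 (fst e) \<and> \<omega> (snd e) = \<omega>0 (snd e) then u_min q u else 0)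
        - (if \<omega>0 (fst e) \<noteq> \<omega>0 (snd e) then u_min q u + u_max q u else 0) \<le> ?c e"
      by (rule edge_energy_change_ge) (use assms(1,2,6) V nonneg diag in \<open>auto simp: config_def\<close>)
    ultimately show "?gain e - ?loss e \<le> ?c e" by simp
  qed
  also have "(\<Sum>e\<in>?T. ?gain e - ?loss e) = sum ?gain ?T - sum ?loss ?T"
    by (rule sum_subtractf)
  also have "sum ?gain ?T = u_min q u * card (down_boundary d S)"
  proof -
    have "?T \<inter> down_boundary d S = down_boundary d S"
      unfolding down_boundary_def edges_meeting_def by blast
    then show ?thesis
      using sum.inter_restrict[OF finT, of "\<lambda>_. u_min q u" "down_boundary d S"] by (simp add: mult.commute)
  qed
  also have "sum ?loss ?T = (u_min q u + u_max q u) * card (?T \<inter> broken_edges d \<omega>0)"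
    using sum.inter_restrict[OF finT, of "\<lambda>_. u_min q u + u_max q u" "broken_edges d \<omega>0"] by (simp add: mult.commute)
  finally show ?thesis .
qed

lemma stability_constant_pos:
  fixes u U :: real and d dmax :: nat
  assumes "u > 0" "real d \<ge> 2 + of_int \<lfloor>real dmax * (u + U) / u\<rfloor>"
  shows "(real d - 1) * u - real dmax * (u + U) > 0"
proof -
  have "real dmax * (u + U) / u < real d - 1"
    using real_of_int_floor_add_one_gt[of "real dmax * (u + U) / u"] assms(2) by linarith
  then have "real dmax * (u + U) < (real d - 1) * u"
    by (simp only: pos_divide_less_eq[OF assms(1)])
  then show ?thesis by simp
qed

theorem mainTheorem5:
  fixes q :: nat and u :: "nat \<Rightarrow> nat \<Rightarrow> real" and dmax d :: nat
    and \<omega>0 :: "nat list \<Rightarrow> nat"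
  assumes "q \<ge> 2"
    and "\<And>k l. k < q \<Longrightarrow> l < q \<Longrightarrow> u k l \<ge> 0"
    and "\<And>k. k < q \<Longrightarrow> u k k = 0"
    and "u_min q u > 0"
    and "real d \<ge> 2 + of_int \<lfloor>real dmax * (u_min q u + u_max q u) / u_min q u\<rfloor>"
    and "config d q \<omega>0"
    and "\<And>v. v \<in> tree_V d \<Longrightarrow> broken_deg d \<omega>0 v \<le> dmax"
  shows "stable_with d q u \<omega>0 ((real d - 1) * u_min q u - real dmax * (u_min q u + u_max q u))"
  unfolding stable_with_def
proof (intro conjI allI impI)
  let ?u = "u_min q u" and ?U = "u_max q u"
  show "(real d - 1) * ?u - real dmax * (?u + ?U) > 0"
    using stability_constant_pos assms(4,5) .
  fix \<omega> assume \<omega>: "config d q \<omega> \<and> finite (diff_set d \<omega> \<omega>0)"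
  define S where "S = diff_set d \<omega> \<omega>0"
  have S: "finite S" "S \<subseteq> tree_V d" using \<omega> by (auto simp: S_def diff_set_def)
  have "0 \<le> ?U" using u_max_ge[of 0 q 0 u] assms(1,3) by simp
  have "real (d * card S) \<le> real (card (down_boundary d S) + card S)"
    using card_down_boundary_ge[OF S] by (simp only: of_nat_le_iff)
  then have "(real d - 1) * card S \<le> card (down_boundary d S)" by (simp add: left_diff_distrib)
  then have gain: "?u * ((real d - 1) * card S) \<le> ?u * card (down_boundary d S)"
    using assms(4) by (intro mult_left_mono) auto
  have "real (card (edges_meeting d S \<inter> broken_edges d \<omega>0)) \<le> real (dmax * card S)"
    using card_broken_edges_meeting_le[OF S assms(7)] by (simp only: of_nat_le_iff)
  then have loss: "(?u + ?U) * card (edges_meeting d S \<inter> broken_edges d \<omega>0) \<le> (?u + ?U) * (dmax * card S)"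
    using assms(4) \<open>0 \<le> ?U\<close> by (intro mult_left_mono) auto
  have "?u * card (down_boundary d S) - (?u + ?U) * card (edges_meeting d S \<inter> broken_edges d \<omega>0)
      \<le> Hdiff d u \<omega> \<omega>0"
    unfolding S_def by (rule Hdiff_ge) (use \<omega> assms(2,3,4,6) in auto)
  moreover have "((real d - 1) * ?u - dmax * (?u + ?U)) * card S
      = ?u * ((real d - 1) * card S) - (?u + ?U) * (dmax * card S)"
    by (simp add: algebra_simps)
  ultimately show "((real d - 1) * ?u - dmax * (?u + ?U)) * card (diff_set d \<omega> \<omega>0) \<le> Hdiff d u \<omega> \<omega>0"
    using gain loss unfolding S_def by linarith
qed

end
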